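(* Let $k\ge 1$ be a fixed integer and let $n$ be sufficiently large with respect to $k$. Let $G$ be a graph of order $n$ with $|E(G)|\le kn$ and $\Delta(G)<2n/3+o(n)$. Let $T$ be a tree with $|V(T)|\le n$ and $\Delta(T)<60(2k+1)n^{3/4}$. Let $I\subset V(G)$ with $|I|\le k$ such that $d_G(v)\le 2k$ for every $v\in I$. Let $I'\subset V(T)$ with $|I'|=|I|$ such that $d_T(v')\le 2$ for every $v'\in I'$. Suppose there is a packing $h':I'\to I$ of $T[I']$ and $G[I]$. Then there is a packing $f':V(T)\to V(G)$ of $T$ and $G$ such that (1) $\Delta(f'(T)\oplus G)\le 2n/3+o(n)$, and (2) $f'(v')=h'(v')$ for every $v'\in I'$.
   Context: For graphs $H_1,H_2$ with $|V(H_1)|\le |V(H_2)|$, an injection $f:V(H_1)\to V(H_2)$ is a packing of $H_1$ and $H_2$ if $E(f(H_1))\cap E(H_2)=\emptyset$, where $f(H_1)$ is the graph on $V(H_2)$ with edge set $\{f(u)f(v):uv\in E(H_1)\}$. For graphs $G,H$ (vertex sets not necessarily disjoint), $G\oplus H$ is the graph with vertex set $V(G)\cup V(H)$ and edge set $E(G)\cup E(H)$. $T[I']$, $G[I]$ denote induced subgraphs; $\Delta$ is the maximum degree, $d_G(v)$ the degree of $v$ in $G$. The $o(n)$ terms are with respect to $n\to\infty$ for fixed $k$. *)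

theory Defs
  imports Complex_Main "HOL-Library.Landau_Symbols"
begin

definition sgraph :: "'a set \<Rightarrow> 'a set set \<Rightarrow> bool" where
  "sgraph V E \<longleftrightarrow> finite V \<and> (\<forall>e\<in>E. e \<subseteq> V \<and> card e = 2)"

definition degree :: "'a set set \<Rightarrow> 'a \<Rightarrow> nat" where
  "degree E v = card {e\<in>E. v \<in> e}"

definition maxdeg :: "'a set \<Rightarrow> 'a set set \<Rightarrow> nat" where
  "maxdeg V E = Max (insert 0 (degree E ` V))"

definition induced :: "'a set set \<Rightarrow> 'a set \<Rightarrow> 'a set set" where
  "induced E S = {e\<in>E. e \<subseteq> S}"

definition adj :: "'a set set \<Rightarrow> ('a \<times> 'a) set" where
  "adj E = {(u, v). {u, v} \<in> E}"

definition connected_graph :: "'a set \<Rightarrow> 'a set set \<Rightarrow> bool" where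
  "connected_graph V E \<longleftrightarrow> (\<forall>u\<in>V. \<forall>v\<in>V. (u, v) \<in> (adj E)\<^sup>*)"

definition tree :: "'a set \<Rightarrow> 'a set set \<Rightarrow> bool" where
  "tree V E \<longleftrightarrow> sgraph V E \<and> V \<noteq> {} \<and> connected_graph V E \<and> card E = card V - 1"

definition packing :: "'a set \<Rightarrow> 'a set set \<Rightarrow> 'b set \<Rightarrow> 'b set set \<Rightarrow> ('a \<Rightarrow> 'b) \<Rightarrow> bool" where
  "packing V1 E1 V2 E2 f \<longleftrightarrow>
     inj_on f V1 \<and> f ` V1 \<subseteq> V2 \<and> ((\<lambda>e. f ` e) ` E1) \<inter> E2 = {}"

end

theory Submission
  imports Defs "HOL-Real_Asymp.Real_Asymp"
begin

text \<open>A vertex of G is heavy if its degree exceeds D = n^(1/8); since G has at most kn edges there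
  are at most 2kn/D heavy vertices. They are placed first, on pairwise non-adjacent vertices of T of
  degree at most 2 away from I' and its neighbours, keeping for every vertex x of T the total degree
  of the heavy vertices placed next to x below n/10. Extending this by h' on I' and by an arbitrary
  injection elsewhere gives an embedding in which every conflict (an edge of T mapped onto an edge
  of G) has an endpoint x that is neither prescribed nor mapped to a heavy vertex. Counting shows
  that some vertex s of G can take the place of f x, with the old preimage of s moving to f x,
  without creating new conflicts; hence an embedding with fewest conflicts is a packing. Finally
  the maximum degree of f(T) \<oplus> G is at most the sum of the maximum degrees, and the maximum
  degree of T is O(n^(3/4)) = o(n).\<close>

section \<open>Degrees in simple graphs\<close>

definition nbrs :: "'a set set \<Rightarrow> 'a \<Rightarrow> 'a set" where
  "nbrs E v = {w. {v, w} \<in> E}"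

lemma sgraph_finite: "sgraph V E \<Longrightarrow> finite V"
  by (simp add: sgraph_def)

lemma sgraph_edge_subset: "sgraph V E \<Longrightarrow> e \<in> E \<Longrightarrow> e \<subseteq> V"
  by (simp add: sgraph_def)

lemma sgraph_finite_edges: "sgraph V E \<Longrightarrow> finite E"
  by (meson Pow_iff finite_Pow_iff finite_subset sgraph_edge_subset sgraph_finite subsetI)

lemma sgraph_edgeE:
  assumes "sgraph V E" "e \<in> E"
  obtains u w where "e = {u, w}" "u \<noteq> w" "u \<in> V" "w \<in> V"
  using assms unfolding sgraph_def by (metis card_2_iff insert_subset)

lemma sgraph_loop_free: "sgraph V E \<Longrightarrow> {v} \<notin> E"
  unfolding sgraph_def by fastforce

lemma nbrs_commute: "w \<in> nbrs E v \<longleftrightarrow> v \<in> nbrs E w"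
  by (simp add: nbrs_def insert_commute)

lemma nbrs_subset: "sgraph V E \<Longrightarrow> nbrs E v \<subseteq> V"
  unfolding nbrs_def sgraph_def by auto

lemma finite_nbrs: "sgraph V E \<Longrightarrow> finite (nbrs E v)"
  using nbrs_subset sgraph_finite finite_subset by metis

lemma degree_eq_card_nbrs:
  assumes "sgraph V E"
  shows "degree E v = card (nbrs E v)"
proof -
  have "{e\<in>E. v \<in> e} = (\<lambda>w. {v, w}) ` nbrs E v"
  proof (intro equalityI subsetI)
    fix e assume e: "e \<in> {e\<in>E. v \<in> e}"
    then obtain a b where "e = {a, b}" using sgraph_edgeE[OF assms] by blast
    with e show "e \<in> (\<lambda>w. {v, w}) ` nbrs E v"
      by (auto simp: nbrs_def image_iff insert_commute)
  qed (auto simp: nbrs_def)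
  moreover have "inj_on (\<lambda>w. {v, w}) (nbrs E v)"
    by (auto simp: inj_on_def doubleton_eq_iff)
  ultimately show ?thesis
    unfolding degree_def by (simp add: card_image)
qed

lemma sum_degree_eq_twice_card_edges:
  assumes "sgraph V E"
  shows "(\<Sum>v\<in>V. degree E v) = 2 * card E"
proof -
  have fin: "finite V" "finite E"
    using assms sgraph_finite sgraph_finite_edges by auto
  have "(\<Sum>v\<in>V. degree E v) = (\<Sum>v\<in>V. \<Sum>e\<in>E. if v \<in> e then 1 else 0)"
    unfolding degree_def using fin by (simp add: sum.If_cases Int_def conj_commute)
  also have "\<dots> = (\<Sum>e\<in>E. \<Sum>v\<in>V. if v \<in> e then 1 else 0)"
    by (rule sum.swap)
  also have "\<dots> = (\<Sum>e\<in>E. card e)"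
    using fin sgraph_edge_subset[OF assms] by (intro sum.cong) (auto simp: sum.If_cases Int_absorb1)
  also have "\<dots> = (\<Sum>e\<in>E. 2)"
    using assms by (auto simp: sgraph_def)
  finally show ?thesis by simp
qed

lemma degree_le_maxdeg: "finite V \<Longrightarrow> v \<in> V \<Longrightarrow> degree E v \<le> maxdeg V E"
  unfolding maxdeg_def by simp

lemma maxdeg_leI: "finite V \<Longrightarrow> (\<And>v. v \<in> V \<Longrightarrow> degree E v \<le> b) \<Longrightarrow> maxdeg V E \<le> b"
  unfolding maxdeg_def by auto

lemma real_card_UN_le:
  "finite A \<Longrightarrow> real (card (\<Union>a\<in>A. F a)) \<le> (\<Sum>a\<in>A. real (card (F a)))"
  by (metis card_UN_le of_nat_le_iff of_nat_sum)

lemma card_high_degree_le: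
  assumes "sgraph V E" "D > 0"
  shows "real (card {v\<in>V. D < real (degree E v)}) \<le> 2 * real (card E) / D"
proof -
  let ?H = "{v\<in>V. D < real (degree E v)}"
  have "real (card ?H) * D = (\<Sum>v\<in>?H. D)" by simp
  also have "\<dots> \<le> (\<Sum>v\<in>?H. real (degree E v))"
    by (rule sum_mono) auto
  also have "\<dots> \<le> (\<Sum>v\<in>V. real (degree E v))"
    using sgraph_finite[OF assms(1)] by (intro sum_mono2) auto
  also have "\<dots> = 2 * real (card E)"
    using sum_degree_eq_twice_card_edges[OF assms(1)] by (metis of_nat_mult of_nat_numeral of_nat_sum)
  finally show ?thesis using assms(2) by (simp add: field_simps)
qed

lemma card_low_degree_ge:
  assumes "sgraph V E" "card E \<le> card V"
  shows "card V \<le> 3 * card {v\<in>V. degree E v \<le> 2}"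
proof -
  let ?L = "{v\<in>V. degree E v \<le> 2}" and ?H = "{v\<in>V. \<not> degree E v \<le> 2}"
  have fin: "finite V" using sgraph_finite[OF assms(1)] .
  have "3 * card ?H = (\<Sum>v\<in>?H. 3)" by simp
  also have "\<dots> \<le> (\<Sum>v\<in>?H. degree E v)" by (rule sum_mono) auto
  also have "\<dots> \<le> (\<Sum>v\<in>V. degree E v)" using fin by (intro sum_mono2) auto
  also have "\<dots> \<le> 2 * card V"
    using sum_degree_eq_twice_card_edges[OF assms(1)] assms(2) by simp
  finally have "3 * card ?H \<le> 2 * card V" .
  moreover have "card V = card ?L + card ?H"
  proof -
    have "card (?L \<union> ?H) = card ?L + card ?H" using fin by (intro card_Un_disjoint) auto
    moreover have "?L \<union> ?H = V" by blast
    ultimately show ?thesis by simp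
  qed
  ultimately show ?thesis by linarith
qed

lemma maxdeg_image_union_le:
  assumes T: "sgraph VT ET" and G: "sgraph VG EG" and inj: "inj_on f VT" and img: "f ` VT \<subseteq> VG"
  shows "maxdeg VG ((\<lambda>e. f ` e) ` ET \<union> EG) \<le> maxdeg VT ET + maxdeg VG EG"
proof (rule maxdeg_leI[OF sgraph_finite[OF G]])
  fix v assume v: "v \<in> VG"
  let ?A = "(\<lambda>e. f ` e) ` ET"
  have "card {e\<in>?A. v \<in> e} \<le> maxdeg VT ET"
  proof (cases "v \<in> f ` VT")
    case True
    then obtain x where x: "x \<in> VT" "v = f x" by blast
    have "{e\<in>?A. v \<in> e} \<subseteq> (\<lambda>e. f ` e) ` {e\<in>ET. x \<in> e}"
    proof
      fix e' assume "e' \<in> {e\<in>?A. v \<in> e}"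
      then obtain e y where e: "e \<in> ET" "e' = f ` e" "y \<in> e" "f y = f x"
        using x by auto
      have "y = x" using e x inj sgraph_edge_subset[OF T] by (meson inj_onD subsetD)
      with e show "e' \<in> (\<lambda>e. f ` e) ` {e\<in>ET. x \<in> e}" by blast
    qed
    hence "card {e\<in>?A. v \<in> e} \<le> card ((\<lambda>e. f ` e) ` {e\<in>ET. x \<in> e})"
      by (rule card_mono[rotated]) (simp add: sgraph_finite_edges[OF T])
    also have "\<dots> \<le> degree ET x"
      unfolding degree_def by (rule card_image_le) (simp add: sgraph_finite_edges[OF T])
    also have "\<dots> \<le> maxdeg VT ET" by (rule degree_le_maxdeg[OF sgraph_finite[OF T] x(1)])
    finally show ?thesis .
  next
    case False
    hence "{e\<in>?A. v \<in> e} = {}" using sgraph_edge_subset[OF T] by blast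
    thus ?thesis by (simp only: card.empty le0)
  qed
  moreover have "degree (?A \<union> EG) v \<le> card {e\<in>?A. v \<in> e} + degree EG v"
  proof -
    have "{e\<in>?A \<union> EG. v \<in> e} = {e\<in>?A. v \<in> e} \<union> {e\<in>EG. v \<in> e}" by blast
    thus ?thesis unfolding degree_def by (simp only: card_Un_le)
  qed
  moreover have "degree EG v \<le> maxdeg VG EG" by (rule degree_le_maxdeg[OF sgraph_finite[OF G] v])
  ultimately show "degree (?A \<union> EG) v \<le> maxdeg VT ET + maxdeg VG EG" by linarith
qed

section \<open>Removing conflicts by exchanges\<close>

definition exchange :: "('a \<Rightarrow> 'b) \<Rightarrow> 'a \<Rightarrow> 'b \<Rightarrow> 'a \<Rightarrow> 'b" where
  "exchange f x s v = (if v = x then s else if f v = s then f x else f v)"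

lemma inj_on_exchange: "inj_on f A \<Longrightarrow> x \<in> A \<Longrightarrow> inj_on (exchange f x s) A"
  unfolding inj_on_def exchange_def by metis

lemma exchange_image_subset: "f ` A \<subseteq> B \<Longrightarrow> x \<in> A \<Longrightarrow> s \<in> B \<Longrightarrow> exchange f x s ` A \<subseteq> B"
  unfolding exchange_def by auto

lemma exchange_mem_iff:
  "s \<notin> H \<Longrightarrow> f x \<notin> H \<Longrightarrow> exchange f x s v \<in> H \<longleftrightarrow> f v \<in> H"
  unfolding exchange_def by auto

lemma exchange_eq_if_mem:
  "s \<notin> H \<Longrightarrow> f x \<notin> H \<Longrightarrow> f v \<in> H \<Longrightarrow> exchange f x s v = f v"
  unfolding exchange_def by auto

text \<open>The two
  room assumptions are the counting inequalities behind the choice of an exchange partner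
  (card_blocked_less) and of a free slot for a heavy vertex (slot_ok_exists).\<close>
locale tree_packing =
  fixes VG :: "'b set" and EG :: "'b set set" and VT :: "'a set" and ET :: "'a set set"
    and I :: "'b set" and I' :: "'a set" and h' :: "'a \<Rightarrow> 'b" and k :: nat
    and D :: real and DT :: real and DG :: real
  assumes graph_G: "sgraph VG EG" and graph_T: "sgraph VT ET"
    and card_EG: "real (card EG) \<le> real k * real (card VG)"
    and card_VT: "card VT \<le> card VG"
    and card_ET: "card ET \<le> card VT"
    and degree_T: "\<And>v. v \<in> VT \<Longrightarrow> real (degree ET v) \<le> DT"
    and degree_G: "\<And>v. v \<in> VG \<Longrightarrow> real (degree EG v) \<le> DG"
    and I_subset: "I \<subseteq> VG" and card_I: "card I \<le> k"
    and degree_I: "\<And>v. v \<in> I \<Longrightarrow> real (degree EG v) \<le> D"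
    and I'_subset: "I' \<subseteq> VT" and card_I': "card I' = card I"
    and degree_I': "\<And>v. v \<in> I' \<Longrightarrow> degree ET v \<le> 2"
    and packing_I: "packing I' (induced ET I') I (induced EG I) h'"
    and D_pos: "D > 0" and DT_nonneg: "DT \<ge> 0" and DG_nonneg: "DG \<ge> 0"
    and room_exchange: "2 * real k * real (card VG) / D + real k + 1 + D + DG
       + real (card VG) / 10 + 2 * DT * D < real (card VG)"
    and room_placement: "3 * real k + 6 * real k * real (card VG) / D + 40 * real k * DT
       < (real (card VG) - 2 * real k * real (card VG) / D) / 3"
begin

definition heavy :: "'b set" where
  "heavy = {v\<in>VG. D < real (degree EG v)}"

definition load_cap :: real where
  "load_cap = DG + real (card VG) / 10"

definition conflicts :: "('a \<Rightarrow> 'b) \<Rightarrow> 'a set set" where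
  "conflicts f = {e\<in>ET. f ` e \<in> EG}"

definition heavy_reach :: "('a \<Rightarrow> 'b) \<Rightarrow> 'a \<Rightarrow> 'b set" where
  "heavy_reach f x = (\<Union>w\<in>{w\<in>nbrs ET x. f w \<in> heavy}. nbrs EG (f w))"

text \<open>The invariant kept while conflicts are removed. The bound on heavy_reach is what leaves
  room for an exchange partner; heavy vertices are never moved by an exchange.\<close>
definition admissible :: "('a \<Rightarrow> 'b) \<Rightarrow> bool" where
  "admissible f \<longleftrightarrow> inj_on f VT \<and> f ` VT \<subseteq> VG \<and> (\<forall>v\<in>I'. f v = h' v)
     \<and> (\<forall>e\<in>ET. \<not> f ` e \<subseteq> heavy) \<and> (\<forall>v\<in>I'. \<forall>w\<in>nbrs ET v. f w \<notin> heavy)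
     \<and> (\<forall>x\<in>VT. real (card (heavy_reach f x)) \<le> load_cap)"

lemma admissibleD:
  assumes "admissible f"
  shows "inj_on f VT" "f ` VT \<subseteq> VG" "\<forall>v\<in>I'. f v = h' v" "\<forall>e\<in>ET. \<not> f ` e \<subseteq> heavy"
    "\<forall>v\<in>I'. \<forall>w\<in>nbrs ET v. f w \<notin> heavy" "\<forall>x\<in>VT. real (card (heavy_reach f x)) \<le> load_cap"
  using assms unfolding admissible_def by simp_all

lemma finite_VG: "finite VG" and finite_VT: "finite VT" and finite_ET: "finite ET"
  using graph_G graph_T sgraph_finite sgraph_finite_edges by blast+

lemma heavy_subset: "heavy \<subseteq> VG"
  unfolding heavy_def by auto

lemma finite_heavy: "finite heavy"
  using finite_VG heavy_subset finite_subset by blast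

lemma finite_I': "finite I'"
  using I'_subset finite_VT finite_subset by blast

lemma card_heavy: "real (card heavy) \<le> 2 * real k * real (card VG) / D"
proof -
  have "real (card heavy) \<le> 2 * real (card EG) / D"
    unfolding heavy_def by (rule card_high_degree_le[OF graph_G D_pos])
  also have "\<dots> \<le> 2 * (real k * real (card VG)) / D"
    using card_EG D_pos by (intro divide_right_mono) auto
  finally show ?thesis by simp
qed

lemma card_nbrs_light: "v \<in> VG \<Longrightarrow> v \<notin> heavy \<Longrightarrow> real (card (nbrs EG v)) \<le> D"
  using degree_eq_card_nbrs[OF graph_G] unfolding heavy_def by fastforce

lemma card_nbrs_T: "v \<in> VT \<Longrightarrow> real (card (nbrs ET v)) \<le> DT"
  using degree_T degree_eq_card_nbrs[OF graph_T] by simp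

lemma I_light: "I \<inter> heavy = {}"
  using degree_I unfolding heavy_def by force

lemma inj_on_h': "inj_on h' I'" and h'_image: "h' ` I' \<subseteq> I"
  using packing_I unfolding packing_def by auto

lemma card_h'_image: "card (h' ` I') = card I'"
  by (rule card_image[OF inj_on_h'])

text \<open>Both endpoints in I' would contradict that h' is a packing.\<close>
lemma conflict_has_free_endpoint:
  assumes f: "admissible f" and e: "e \<in> conflicts f"
  obtains x where "x \<in> e" "x \<in> VT" "x \<notin> I'" "f x \<notin> heavy"
proof -
  from e have eT: "e \<in> ET" and fe: "f ` e \<in> EG" by (auto simp: conflicts_def)
  obtain u v where uv: "e = {u, v}" "u \<in> VT" "v \<in> VT"
    using sgraph_edgeE[OF graph_T eT] by metis
  note fixed = admissibleD(3)[OF f] and heavy_free = admissibleD(4)[OF f]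
    and nbrs_I' = admissibleD(5)[OF f]
  have "\<not> e \<subseteq> I'"
  proof
    assume sub: "e \<subseteq> I'"
    have "h' ` e = f ` e" using sub fixed by (intro image_cong[OF refl]) auto
    moreover have "h' ` e \<subseteq> I" using sub h'_image by blast
    ultimately have "h' ` e \<in> induced EG I" using fe by (simp add: induced_def)
    moreover have "e \<in> induced ET I'" using eT sub by (simp add: induced_def)
    ultimately show False using packing_I unfolding packing_def by blast
  qed
  hence "u \<notin> I' \<or> v \<notin> I'" using uv(1) by simp
  moreover have "\<not> (f u \<in> heavy \<and> f v \<in> heavy)" using heavy_free eT uv(1) by auto
  moreover have "v \<in> nbrs ET u" "u \<in> nbrs ET v"
    using eT uv(1) by (auto simp: nbrs_def insert_commute)
  hence "u \<in> I' \<Longrightarrow> f v \<notin> heavy" "v \<in> I' \<Longrightarrow> f u \<notin> heavy" using nbrs_I' by blast+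
  ultimately have "(u \<notin> I' \<and> f u \<notin> heavy) \<or> (v \<notin> I' \<and> f v \<notin> heavy)" by blast
  thus thesis using that uv by blast
qed

lemma admissible_image: "admissible f \<Longrightarrow> v \<in> VT \<Longrightarrow> f v \<in> VG"
  using admissibleD(2) by blast

lemma card_nbrs_images:
  assumes f: "admissible f" and x: "x \<in> VT"
  shows "real (card (\<Union>w\<in>nbrs ET x. nbrs EG (f w))) \<le> load_cap + DT * D"
proof -
  let ?L = "{w\<in>nbrs ET x. f w \<notin> heavy}"
  have "(\<Union>w\<in>nbrs ET x. nbrs EG (f w)) = heavy_reach f x \<union> (\<Union>w\<in>?L. nbrs EG (f w))"
    unfolding heavy_reach_def by blast
  hence "card (\<Union>w\<in>nbrs ET x. nbrs EG (f w))
      \<le> card (heavy_reach f x) + card (\<Union>w\<in>?L. nbrs EG (f w))"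
    by (simp only: card_Un_le)
  hence "real (card (\<Union>w\<in>nbrs ET x. nbrs EG (f w)))
      \<le> real (card (heavy_reach f x)) + real (card (\<Union>w\<in>?L. nbrs EG (f w)))"
    by (simp only: of_nat_add[symmetric] of_nat_le_iff)
  moreover have "real (card (heavy_reach f x)) \<le> load_cap"
    using admissibleD(6)[OF f] x by blast
  moreover have "real (card (\<Union>w\<in>?L. nbrs EG (f w))) \<le> (\<Sum>w\<in>?L. real (card (nbrs EG (f w))))"
    by (rule real_card_UN_le) (simp add: finite_nbrs[OF graph_T])
  moreover have "\<dots> \<le> real (card ?L) * D"
    using admissible_image[OF f] nbrs_subset[OF graph_T] card_nbrs_light
    by (intro sum_bounded_above) blast
  moreover have "real (card ?L) \<le> DT"
    using card_mono[OF finite_nbrs[OF graph_T], of ?L x] card_nbrs_T[OF x] by simp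
  hence "real (card ?L) * D \<le> DT * D"
    using D_pos by simp
  ultimately show ?thesis by linarith
qed

lemma card_image_second_nbrs:
  assumes f: "admissible f" and a: "a \<in> VG" "a \<notin> heavy"
  shows "real (card (f ` (\<Union>w\<in>{w\<in>VT. f w \<in> nbrs EG a}. nbrs ET w))) \<le> D * DT"
proof -
  let ?W = "{w\<in>VT. f w \<in> nbrs EG a}"
  have "card ?W \<le> card (nbrs EG a)"
    using admissibleD(1)[OF f] finite_nbrs[OF graph_G]
    by (intro card_inj_on_le[of f]) (auto intro: inj_on_subset)
  hence W: "real (card ?W) \<le> D"
    using card_nbrs_light[OF a] by linarith
  have "real (card (f ` (\<Union>w\<in>?W. nbrs ET w))) \<le> real (card (\<Union>w\<in>?W. nbrs ET w))"
    by (simp add: card_image_le finite_VT finite_nbrs[OF graph_T])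
  also have "\<dots> \<le> (\<Sum>w\<in>?W. real (card (nbrs ET w)))"
    by (rule real_card_UN_le) (simp add: finite_VT)
  also have "\<dots> \<le> real (card ?W) * DT"
    using card_nbrs_T by (intro sum_bounded_above) auto
  also have "\<dots> \<le> D * DT"
    using W DT_nonneg by (simp add: mult_right_mono)
  finally show ?thesis .
qed

text \<open>The vertices of G that cannot serve as the new image of x: moving x onto any other vertex s,
  and the old preimage of s onto f x, creates no conflict at x or at that preimage.\<close>
definition blocked :: "('a \<Rightarrow> 'b) \<Rightarrow> 'a \<Rightarrow> 'b set" where
  "blocked f x = heavy \<union> h' ` I' \<union> {f x} \<union> nbrs EG (f x) \<union> (\<Union>w\<in>nbrs ET x. nbrs EG (f w))
     \<union> f ` (\<Union>w\<in>{w\<in>VT. f w \<in> nbrs EG (f x)}. nbrs ET w)"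

lemma blocked_subset:
  assumes f: "admissible f" and x: "x \<in> VT"
  shows "blocked f x \<subseteq> VG"
proof -
  have "f ` (\<Union>w\<in>{w\<in>VT. f w \<in> nbrs EG (f x)}. nbrs ET w) \<subseteq> VG"
    using admissibleD(2)[OF f] nbrs_subset[OF graph_T] by blast
  moreover have "(\<Union>w\<in>nbrs ET x. nbrs EG (f w)) \<subseteq> VG"
    using nbrs_subset[OF graph_G] by blast
  moreover have "heavy \<union> h' ` I' \<union> {f x} \<union> nbrs EG (f x) \<subseteq> VG"
    using heavy_subset h'_image I_subset admissible_image[OF f x] nbrs_subset[OF graph_G] by blast
  ultimately show ?thesis
    unfolding blocked_def by (simp only: Un_subset_iff)
qed

lemma card_blocked_less:
  assumes f: "admissible f" and x: "x \<in> VT" "f x \<notin> heavy"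
  shows "card (blocked f x) < card VG"
proof -
  let ?a = "f x"
  have a: "?a \<in> VG" using admissible_image[OF f x(1)] .
  have "card (blocked f x) \<le> card heavy + card (h' ` I') + card {?a} + card (nbrs EG ?a)
      + card (\<Union>w\<in>nbrs ET x. nbrs EG (f w))
      + card (f ` (\<Union>w\<in>{w\<in>VT. f w \<in> nbrs EG ?a}. nbrs ET w))"
    unfolding blocked_def by (meson card_Un_le add_le_mono le_refl order_trans)
  hence "real (card (blocked f x)) \<le> real (card heavy) + real (card (h' ` I')) + 1
      + real (card (nbrs EG ?a)) + real (card (\<Union>w\<in>nbrs ET x. nbrs EG (f w)))
      + real (card (f ` (\<Union>w\<in>{w\<in>VT. f w \<in> nbrs EG ?a}. nbrs ET w)))"
    by simp
  also have "\<dots> \<le> 2 * real k * real (card VG) / D + real k + 1 + D + (load_cap + DT * D) + D * DT"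
    using card_heavy card_h'_image card_I' card_I card_nbrs_light[OF a x(2)]
      card_nbrs_images[OF f x(1)] card_image_second_nbrs[OF f a x(2)]
    by linarith
  also have "\<dots> < real (card VG)"
    using room_exchange unfolding load_cap_def by (simp add: algebra_simps)
  finally show ?thesis by simp
qed

lemma unblocked_exists:
  assumes "admissible f" "x \<in> VT" "f x \<notin> heavy"
  obtains s where "s \<in> VG" "s \<notin> blocked f x"
proof -
  have "\<not> VG \<subseteq> blocked f x"
  proof
    assume "VG \<subseteq> blocked f x"
    hence "blocked f x = VG" using blocked_subset[OF assms(1,2)] by blast
    thus False using card_blocked_less[OF assms] by simp
  qed
  thus thesis using that by blast
qed

lemma admissible_exchange:
  assumes f: "admissible f" and x: "x \<in> VT" "x \<notin> I'" "f x \<notin> heavy"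
    and s: "s \<in> VG" "s \<notin> blocked f x"
  shows "admissible (exchange f x s)"
proof -
  let ?f = "exchange f x s"
  have s_light: "s \<notin> heavy" and s_free: "s \<notin> h' ` I'" using s unfolding blocked_def by auto
  have heavy_iff: "?f v \<in> heavy \<longleftrightarrow> f v \<in> heavy" for v
    using exchange_mem_iff[of s heavy f x] s_light x(3) by blast
  have heavy_eq: "f v \<in> heavy \<Longrightarrow> ?f v = f v" for v
    using exchange_eq_if_mem[of s heavy f x] s_light x(3) by blast
  have "inj_on ?f VT"
    using admissibleD(1)[OF f] x(1) by (rule inj_on_exchange)
  moreover have "?f ` VT \<subseteq> VG"
    using admissibleD(2)[OF f] x(1) s(1) by (rule exchange_image_subset)
  moreover have "\<forall>v\<in>I'. ?f v = h' v"
  proof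
    fix v assume v: "v \<in> I'"
    hence "f v = h' v" using admissibleD(3)[OF f] by blast
    thus "?f v = h' v" using v x(2) s_free unfolding exchange_def by auto
  qed
  moreover have "\<forall>e\<in>ET. \<not> ?f ` e \<subseteq> heavy" "\<forall>v\<in>I'. \<forall>w\<in>nbrs ET v. ?f w \<notin> heavy"
    using admissibleD(4,5)[OF f] by (simp_all add: image_subset_iff heavy_iff)
  moreover have "heavy_reach ?f y = heavy_reach f y" for y
    unfolding heavy_reach_def heavy_iff using heavy_eq by (intro SUP_cong) auto
  ultimately show ?thesis using admissibleD(6)[OF f] unfolding admissible_def by simp
qed

lemma exchange_no_conflict_at_moved:
  assumes s: "s \<notin> blocked f x" and xw: "{x, w} \<in> ET"
  shows "exchange f x s ` {x, w} \<notin> EG"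
proof -
  have "w \<in> nbrs ET x" "w \<noteq> x" using xw sgraph_loop_free[OF graph_T] by (auto simp: nbrs_def)
  hence "exchange f x s ` {x, w} = {s, if f w = s then f x else f w}" unfolding exchange_def by auto
  moreover have "s \<notin> nbrs EG (f x)" "s \<notin> nbrs EG (f w)"
    using s \<open>w \<in> nbrs ET x\<close> unfolding blocked_def by auto
  ultimately show ?thesis by (auto simp: nbrs_def insert_commute)
qed

lemma exchange_no_conflict_at_preimage:
  assumes f: "admissible f" and s: "s \<notin> blocked f x"
    and zw: "{z, w} \<in> ET" "z \<in> VT" "w \<in> VT" "f z = s" "z \<noteq> x" "w \<noteq> x"
  shows "exchange f x s ` {z, w} \<notin> EG"
proof -
  have "w \<noteq> z" using zw(1) sgraph_loop_free[OF graph_T] by auto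
  hence "f w \<noteq> s" using admissibleD(1)[OF f] zw by (metis inj_onD)
  hence "exchange f x s ` {z, w} = {f x, f w}" using zw unfolding exchange_def by auto
  moreover have "z \<in> nbrs ET w" using zw(1) by (simp add: nbrs_def insert_commute)
  hence "f w \<notin> nbrs EG (f x)" using s zw unfolding blocked_def by blast
  ultimately show ?thesis by (simp add: nbrs_def)
qed

lemma conflicts_exchange:
  assumes f: "admissible f" and e0: "e0 \<in> conflicts f" and x: "x \<in> e0"
    and s: "s \<notin> blocked f x"
  shows "conflicts (exchange f x s) \<subseteq> conflicts f - {e0}"
proof
  fix e assume "e \<in> conflicts (exchange f x s)"
  hence eT: "e \<in> ET" and fe: "exchange f x s ` e \<in> EG" by (auto simp: conflicts_def)
  obtain p q where pq: "e = {p, q}" "p \<in> VT" "q \<in> VT" using sgraph_edgeE[OF graph_T eT] by metis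
  have x_notin: "x \<notin> e"
  proof
    assume "x \<in> e"
    hence "x = p \<or> x = q" using pq(1) by blast
    moreover have "x = p \<Longrightarrow> {x, q} = e" "x = q \<Longrightarrow> {x, p} = e"
      using pq(1) by (simp_all add: insert_commute)
    ultimately show False using exchange_no_conflict_at_moved[OF s] eT fe by blast
  qed
  have px: "p \<noteq> x" and qx: "q \<noteq> x" using x_notin pq(1) by auto
  have "f p \<noteq> s" using exchange_no_conflict_at_preimage[OF f s, of p q] eT fe pq px qx by blast
  moreover have "{q, p} = e" using pq(1) by (simp add: insert_commute)
  hence "f q \<noteq> s" using exchange_no_conflict_at_preimage[OF f s, of q p] eT fe pq px qx by blast
  ultimately have s_notin: "s \<notin> f ` e" using pq(1) by auto
  have "exchange f x s ` e = f ` e"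
    using x_notin s_notin by (intro image_cong) (auto simp: exchange_def)
  thus "e \<in> conflicts f - {e0}"
    using eT fe x x_notin by (auto simp: conflicts_def)
qed

lemma conflicts_decrease:
  assumes f: "admissible f" and ne: "conflicts f \<noteq> {}"
  obtains f' where "admissible f'" "card (conflicts f') < card (conflicts f)"
proof -
  obtain e0 where e0: "e0 \<in> conflicts f" using ne by blast
  obtain x where x: "x \<in> e0" "x \<in> VT" "x \<notin> I'" "f x \<notin> heavy"
    using conflict_has_free_endpoint[OF f e0] .
  obtain s where s: "s \<in> VG" "s \<notin> blocked f x" using unblocked_exists[OF f x(2,4)] .
  have "finite (conflicts f)" using finite_ET by (simp add: conflicts_def)
  hence "card (conflicts (exchange f x s)) < card (conflicts f)"
    using conflicts_exchange[OF f e0 x(1) s(2)] e0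
    by (meson card_Diff1_less card_mono finite_Diff order_le_less_trans)
  thus thesis using that admissible_exchange[OF f x(2-4) s] by blast
qed

lemma packing_if_admissible:
  assumes "admissible f0"
  obtains f where "packing VT ET VG EG f" "\<forall>v\<in>I'. f v = h' v"
proof -
  obtain f where f: "admissible f" and min: "\<And>g. admissible g \<Longrightarrow> card (conflicts f) \<le> card (conflicts g)"
    using ex_has_least_nat[of admissible f0 "\<lambda>f. card (conflicts f)"] assms by blast
  have "conflicts f = {}"
  proof (rule ccontr)
    assume "conflicts f \<noteq> {}"
    then obtain g where "admissible g" "card (conflicts g) < card (conflicts f)"
      using conflicts_decrease[OF f] by blast
    thus False using min by (simp add: not_le[symmetric])
  qed
  hence "(\<lambda>e. f ` e) ` ET \<inter> EG = {}" unfolding conflicts_def by blast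
  thus thesis using that admissibleD(1-3)[OF f] unfolding packing_def by blast
qed

section \<open>Placing the heavy vertices\<close>

definition slots :: "'a set" where
  "slots = {p\<in>VT. degree ET p \<le> 2 \<and> p \<notin> I' \<and> (\<forall>v\<in>I'. p \<notin> nbrs ET v)}"

definition load :: "('b \<Rightarrow> 'a) \<Rightarrow> 'b set \<Rightarrow> 'a \<Rightarrow> real" where
  "load g Q x = (\<Sum>h\<in>Q. if g h \<in> nbrs ET x then real (degree EG h) else 0)"

text \<open>A partial inverse embedding: the heavy vertices Q of G are assigned, by g, to pairwise
  non-adjacent slots of T. The load of x bounds the heavy_reach of x in the final embedding.\<close>
definition placement :: "'b set \<Rightarrow> ('b \<Rightarrow> 'a) \<Rightarrow> bool" where
  "placement Q g \<longleftrightarrow> Q \<subseteq> heavy \<and> inj_on g Q \<and> g ` Q \<subseteq> slots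
     \<and> (\<forall>h1\<in>Q. \<forall>h2\<in>Q. {g h1, g h2} \<notin> ET) \<and> (\<forall>x\<in>VT. load g Q x \<le> load_cap)"

lemma placementD:
  assumes "placement Q g"
  shows "Q \<subseteq> heavy" "inj_on g Q" "g ` Q \<subseteq> slots" "\<forall>h1\<in>Q. \<forall>h2\<in>Q. {g h1, g h2} \<notin> ET"
    "\<forall>x\<in>VT. load g Q x \<le> load_cap"
  using assms unfolding placement_def by simp_all

lemma finite_placement: "placement Q g \<Longrightarrow> finite Q"
  using placementD(1) finite_heavy finite_subset by blast

lemma card_nbrs_slot: "p \<in> slots \<Longrightarrow> card (nbrs ET p) \<le> 2"
  unfolding slots_def using degree_eq_card_nbrs[OF graph_T] by simp

lemma card_VG_pos: "real (card VG) > 0"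
  using room_exchange D_pos DT_nonneg DG_nonneg
  by (smt (verit) divide_nonneg_pos mult_nonneg_nonneg of_nat_0_le_iff)

lemma card_slots: "real (card VT) / 3 - 3 * real k \<le> real (card slots)"
proof -
  let ?L = "{p\<in>VT. degree ET p \<le> 2}"
  let ?X = "I' \<union> (\<Union>v\<in>I'. nbrs ET v)"
  have "?L \<subseteq> slots \<union> ?X" unfolding slots_def by blast
  moreover have "finite (slots \<union> ?X)"
    using finite_VT finite_I' finite_nbrs[OF graph_T] unfolding slots_def by auto
  ultimately have "card ?L \<le> card (slots \<union> ?X)" by (rule card_mono[rotated])
  also have "\<dots> \<le> card slots + card ?X" by (rule card_Un_le)
  also have "card ?X \<le> card I' + card (\<Union>v\<in>I'. nbrs ET v)" by (rule card_Un_le)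
  also have "card (\<Union>v\<in>I'. nbrs ET v) \<le> (\<Sum>v\<in>I'. card (nbrs ET v))" by (rule card_UN_le[OF finite_I'])
  also have "\<dots> \<le> (\<Sum>v\<in>I'. 2)"
    using degree_I' degree_eq_card_nbrs[OF graph_T] by (intro sum_mono) auto
  finally have "card ?L \<le> card slots + 3 * card I'" by simp
  hence "card ?L \<le> card slots + 3 * k" using card_I' card_I by linarith
  moreover have "card VT \<le> 3 * card ?L" by (rule card_low_degree_ge[OF graph_T card_ET])
  ultimately show ?thesis by linarith
qed

lemma sum_load_le:
  assumes P: "placement Q g"
  shows "(\<Sum>x\<in>VT. load g Q x) \<le> 4 * real k * real (card VG)"
proof -
  have "(\<Sum>x\<in>VT. load g Q x) = (\<Sum>h\<in>Q. \<Sum>x\<in>VT. if g h \<in> nbrs ET x then real (degree EG h) else 0)"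
    unfolding load_def by (rule sum.swap)
  also have "\<dots> = (\<Sum>h\<in>Q. real (degree EG h) * real (card (nbrs ET (g h))))"
  proof (rule sum.cong[OF refl])
    fix h
    have "g h \<in> nbrs ET x \<longleftrightarrow> x \<in> nbrs ET (g h)" for x by (rule nbrs_commute)
    hence "{x\<in>VT. g h \<in> nbrs ET x} = nbrs ET (g h)"
      using nbrs_subset[OF graph_T, of "g h"] by blast
    moreover have "(\<Sum>x\<in>VT. if g h \<in> nbrs ET x then real (degree EG h) else 0)
        = (\<Sum>x\<in>{x\<in>VT. g h \<in> nbrs ET x}. real (degree EG h))"
      by (rule sum.inter_filter[symmetric, OF finite_VT])
    ultimately show "(\<Sum>x\<in>VT. if g h \<in> nbrs ET x then real (degree EG h) else 0)
        = real (degree EG h) * real (card (nbrs ET (g h)))"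
      by (simp only: sum_constant mult.commute)
  qed
  also have "\<dots> \<le> (\<Sum>h\<in>Q. real (degree EG h) * 2)"
  proof (rule sum_mono)
    fix h assume "h \<in> Q"
    hence "real (card (nbrs ET (g h))) \<le> 2"
      using placementD(3)[OF P] card_nbrs_slot by fastforce
    thus "real (degree EG h) * real (card (nbrs ET (g h))) \<le> real (degree EG h) * 2"
      by (simp add: mult_left_mono)
  qed
  also have "\<dots> = 2 * (\<Sum>h\<in>Q. real (degree EG h))"
    by (simp add: sum_distrib_left mult.commute)
  finally have "(\<Sum>x\<in>VT. load g Q x) \<le> 2 * (\<Sum>h\<in>Q. real (degree EG h))" .
  moreover have "(\<Sum>h\<in>Q. real (degree EG h)) \<le> (\<Sum>v\<in>VG. real (degree EG v))"
    using placementD(1)[OF P] heavy_subset by (intro sum_mono2[OF finite_VG]) auto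
  moreover have "(\<Sum>v\<in>VG. real (degree EG v)) = 2 * real (card EG)"
    using sum_degree_eq_twice_card_edges[OF graph_G] by (metis of_nat_mult of_nat_numeral of_nat_sum)
  ultimately show ?thesis using card_EG by linarith
qed

lemma card_overloaded:
  assumes P: "placement Q g"
  shows "real (card {x\<in>VT. real (card VG) / 10 < load g Q x}) \<le> 40 * real k"
proof -
  let ?H = "{x\<in>VT. real (card VG) / 10 < load g Q x}"
  have load_nonneg: "0 \<le> load g Q x" for x
    unfolding load_def by (rule sum_nonneg) auto
  have "real (card ?H) * (real (card VG) / 10) = (\<Sum>x\<in>?H. real (card VG) / 10)" by simp
  also have "\<dots> \<le> (\<Sum>x\<in>?H. load g Q x)" by (rule sum_mono) auto
  also have "\<dots> \<le> (\<Sum>x\<in>VT. load g Q x)" using finite_VT load_nonneg by (intro sum_mono2) auto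
  also have "\<dots> \<le> 4 * real k * real (card VG)" by (rule sum_load_le[OF P])
  finally show ?thesis using card_VG_pos by (simp add: field_simps)
qed

definition slot_ok :: "'b set \<Rightarrow> ('b \<Rightarrow> 'a) \<Rightarrow> 'a \<Rightarrow> bool" where
  "slot_ok Q g p \<longleftrightarrow> p \<in> slots \<and> p \<notin> g ` Q \<and> (\<forall>q\<in>Q. p \<notin> nbrs ET (g q))
     \<and> (\<forall>x\<in>VT. p \<in> nbrs ET x \<longrightarrow> load g Q x \<le> real (card VG) / 10)"

lemma card_slot_blockers:
  assumes P: "placement Q g"
  shows "real (card (g ` Q \<union> (\<Union>q\<in>Q. nbrs ET (g q))
      \<union> (\<Union>x\<in>{x\<in>VT. real (card VG) / 10 < load g Q x}. nbrs ET x)))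
    \<le> 3 * real (card Q) + 40 * real k * DT"
proof -
  let ?O = "{x\<in>VT. real (card VG) / 10 < load g Q x}"
  have finQ: "finite Q" by (rule finite_placement[OF P])
  have "real (card (\<Union>q\<in>Q. nbrs ET (g q))) \<le> (\<Sum>q\<in>Q. real (card (nbrs ET (g q))))"
    by (rule real_card_UN_le[OF finQ])
  also have "\<dots> \<le> real (card Q) * 2"
    using placementD(3)[OF P] card_nbrs_slot by (intro sum_bounded_above) fastforce
  finally have nbrs_Q: "real (card (\<Union>q\<in>Q. nbrs ET (g q))) \<le> 2 * real (card Q)" by simp
  have "real (card (\<Union>x\<in>?O. nbrs ET x)) \<le> (\<Sum>x\<in>?O. real (card (nbrs ET x)))"
    by (rule real_card_UN_le) (simp add: finite_VT)
  also have "\<dots> \<le> real (card ?O) * DT"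
    using card_nbrs_T by (intro sum_bounded_above) auto
  also have "\<dots> \<le> 40 * real k * DT"
    using card_overloaded[OF P] DT_nonneg by (simp add: mult_right_mono)
  finally have nbrs_O: "real (card (\<Union>x\<in>?O. nbrs ET x)) \<le> 40 * real k * DT" .
  have "card (g ` Q \<union> (\<Union>q\<in>Q. nbrs ET (g q)) \<union> (\<Union>x\<in>?O. nbrs ET x))
      \<le> card (g ` Q) + card (\<Union>q\<in>Q. nbrs ET (g q)) + card (\<Union>x\<in>?O. nbrs ET x)"
    by (meson card_Un_le add_le_mono le_refl order_trans)
  moreover have "card (g ` Q) \<le> card Q" by (rule card_image_le[OF finQ])
  ultimately show ?thesis using nbrs_Q nbrs_O by linarith
qed

lemma slot_ok_exists:
  assumes P: "placement Q g" and more: "card VG < card VT + card heavy"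
  obtains p where "slot_ok Q g p"
proof -
  define B where "B = g ` Q \<union> (\<Union>q\<in>Q. nbrs ET (g q))
    \<union> (\<Union>x\<in>{x\<in>VT. real (card VG) / 10 < load g Q x}. nbrs ET x)"
  define X where "X = real k * real (card VG) / D"
  have heavy_X: "real (card heavy) \<le> 2 * X" using card_heavy unfolding X_def by simp
  have "card Q \<le> card heavy"
    using placementD(1)[OF P] finite_heavy by (rule card_mono[rotated])
  hence "real (card B) \<le> 6 * X + 40 * real k * DT"
    using card_slot_blockers[OF P] heavy_X unfolding B_def by linarith
  moreover have "real (card VG) - 2 * X \<le> real (card VT)"
    using more heavy_X by linarith
  moreover have "3 * real k + 6 * X + 40 * real k * DT < (real (card VG) - 2 * X) / 3"
    using room_placement unfolding X_def by simp
  ultimately have "real (card B) < real (card VT) / 3 - 3 * real k"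
    by (simp add: field_simps)
  hence "card B < card slots"
    using card_slots by linarith
  moreover have "finite B"
    unfolding B_def using finite_placement[OF P] finite_nbrs[OF graph_T] finite_VT by auto
  ultimately have "\<not> slots \<subseteq> B" by (meson card_mono not_le)
  then obtain p where "p \<in> slots" "p \<notin> B" by blast
  hence "slot_ok Q g p" unfolding slot_ok_def B_def by (auto simp flip: not_le)
  thus thesis by (rule that)
qed

lemma placement_insert:
  assumes P: "placement Q g" and h: "h \<in> heavy" "h \<notin> Q" and p: "slot_ok Q g p"
  shows "placement (insert h Q) (g(h := p))"
proof -
  let ?g = "g(h := p)"
  have gQ: "?g q = g q" if "q \<in> Q" for q using that h(2) by auto
  have "inj_on ?g (insert h Q)"
    using placementD(2)[OF P] p h(2) unfolding slot_ok_def by (auto simp: inj_on_def)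
  moreover have "?g ` insert h Q \<subseteq> slots"
    using placementD(3)[OF P] p h(2) unfolding slot_ok_def by auto
  moreover have "\<forall>h1\<in>insert h Q. \<forall>h2\<in>insert h Q. {?g h1, ?g h2} \<notin> ET"
  proof (intro ballI)
    fix h1 h2 assume h12: "h1 \<in> insert h Q" "h2 \<in> insert h Q"
    have "{p, p} \<notin> ET" using sgraph_loop_free[OF graph_T] by simp
    moreover have "{p, g q} \<notin> ET" "{g q, p} \<notin> ET" if "q \<in> Q" for q
      using p that unfolding slot_ok_def by (auto simp: nbrs_def insert_commute)
    ultimately show "{?g h1, ?g h2} \<notin> ET"
      using h12 gQ placementD(4)[OF P] by (cases "h1 = h"; cases "h2 = h") auto
  qed
  moreover have "load ?g (insert h Q) x \<le> load_cap" if x: "x \<in> VT" for x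
  proof -
    have "load ?g (insert h Q) x = (if p \<in> nbrs ET x then real (degree EG h) else 0) + load g Q x"
      unfolding load_def using finite_placement[OF P] h(2) gQ by (simp cong: sum.cong)
    moreover have "real (degree EG h) \<le> DG" using degree_G h(1) heavy_subset by blast
    ultimately show ?thesis
      using p x placementD(5)[OF P] unfolding slot_ok_def load_cap_def by auto
  qed
  ultimately show ?thesis
    using placementD(1)[OF P] h(1) unfolding placement_def by blast
qed

lemma placement_exists:
  "j \<le> card VT + card heavy - card VG \<Longrightarrow> \<exists>Q g. placement Q g \<and> card Q = j"
proof (induction j)
  case 0
  have "placement {} g" for g :: "'b \<Rightarrow> 'a"
    unfolding placement_def load_def load_cap_def using DG_nonneg by simp
  thus ?case by (intro exI[of _ "{}"]) simp
next
  case (Suc j)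
  have "j \<le> card VT + card heavy - card VG" using Suc.prems by simp
  then obtain Q g where P: "placement Q g" and cQ: "card Q = j" using Suc.IH by blast
  have "\<not> heavy \<subseteq> Q"
  proof
    assume "heavy \<subseteq> Q"
    hence "card heavy \<le> card Q" by (rule card_mono[OF finite_placement[OF P]])
    thus False using Suc.prems cQ card_VT by linarith
  qed
  then obtain h where h: "h \<in> heavy" "h \<notin> Q" by blast
  have "card VG < card VT + card heavy" using Suc.prems by linarith
  then obtain p where "slot_ok Q g p" using slot_ok_exists[OF P] by blast
  hence "placement (insert h Q) (g(h := p))" by (rule placement_insert[OF P h])
  moreover have "card (insert h Q) = Suc j" using h(2) finite_placement[OF P] cQ by simp
  ultimately show ?case by blast
qed

lemma placement_slots_disjoint: "placement Q g \<Longrightarrow> g ` Q \<subseteq> VT - I'"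
  using placementD(3) unfolding slots_def by blast

lemma card_free_le:
  assumes P: "placement Q g" and cQ: "card Q = card VT + card heavy - card VG"
  shows "card (VT - I' - g ` Q) \<le> card (VG - heavy - h' ` I')"
proof -
  have finQ: "finite (g ` Q)" using finite_placement[OF P] by simp
  have "card (I' \<union> g ` Q) = card I' + card Q"
    using placement_slots_disjoint[OF P] finite_I' finQ card_image[OF placementD(2)[OF P]]
    by (subst card_Un_disjoint) auto
  moreover have "card (VT - I' - g ` Q) = card VT - card (I' \<union> g ` Q)"
  proof -
    have "VT - I' - g ` Q = VT - (I' \<union> g ` Q)" by blast
    moreover have "I' \<union> g ` Q \<subseteq> VT" using placement_slots_disjoint[OF P] I'_subset by blast
    ultimately show ?thesis using finite_I' finQ by (simp add: card_Diff_subset)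
  qed
  moreover have "card (I' \<union> g ` Q) \<le> card VT"
    using placement_slots_disjoint[OF P] I'_subset by (intro card_mono[OF finite_VT]) auto
  moreover have "card (heavy \<union> h' ` I') = card heavy + card I'"
    using I_light h'_image finite_heavy finite_I' card_h'_image
    by (subst card_Un_disjoint) auto
  moreover have "card (VG - heavy - h' ` I') = card VG - card (heavy \<union> h' ` I')"
  proof -
    have "VG - heavy - h' ` I' = VG - (heavy \<union> h' ` I')" by blast
    moreover have "heavy \<union> h' ` I' \<subseteq> VG" using heavy_subset h'_image I_subset by blast
    ultimately show ?thesis using finite_I' finite_heavy by (simp add: card_Diff_subset)
  qed
  moreover have "card (heavy \<union> h' ` I') \<le> card VG"
    using heavy_subset h'_image I_subset by (intro card_mono[OF finite_VG]) auto
  ultimately show ?thesis using cQ card_VT by linarith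
qed

definition glue :: "'b set \<Rightarrow> ('b \<Rightarrow> 'a) \<Rightarrow> ('a \<Rightarrow> 'b) \<Rightarrow> 'a \<Rightarrow> 'b" where
  "glue Q g \<phi> v = (if v \<in> I' then h' v else if v \<in> g ` Q then inv_into Q g v else \<phi> v)"

context
  fixes Q :: "'b set" and g :: "'b \<Rightarrow> 'a" and \<phi> :: "'a \<Rightarrow> 'b"
  assumes P: "placement Q g"
    and inj_\<phi>: "inj_on \<phi> (VT - I' - g ` Q)"
    and image_\<phi>: "\<phi> ` (VT - I' - g ` Q) \<subseteq> VG - heavy - h' ` I'"
begin

lemma glue_I': "v \<in> I' \<Longrightarrow> glue Q g \<phi> v = h' v"
  unfolding glue_def by simp

lemma glue_slot: "q \<in> Q \<Longrightarrow> glue Q g \<phi> (g q) = q"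
  using placement_slots_disjoint[OF P] placementD(2)[OF P] unfolding glue_def by auto

lemma glue_free: "v \<in> VT - I' - g ` Q \<Longrightarrow> glue Q g \<phi> v = \<phi> v"
  unfolding glue_def by simp

lemma glue_in_h'_image_iff:
  assumes v: "v \<in> VT" shows "glue Q g \<phi> v \<in> h' ` I' \<longleftrightarrow> v \<in> I'"
proof (cases "v \<in> I'")
  case False
  have "h' ` I' \<inter> heavy = {}" using h'_image I_light by blast
  moreover have "v \<in> g ` Q \<Longrightarrow> glue Q g \<phi> v \<in> heavy" using glue_slot placementD(1)[OF P] by auto
  moreover have "v \<notin> g ` Q \<Longrightarrow> glue Q g \<phi> v \<notin> h' ` I'" using glue_free image_\<phi> v False by auto
  ultimately show ?thesis using False by blast
qed (simp add: glue_I')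

lemma glue_heavy_iff:
  assumes "v \<in> VT" shows "glue Q g \<phi> v \<in> heavy \<longleftrightarrow> v \<in> g ` Q"
  using assms glue_I' glue_slot glue_free image_\<phi> placementD(1)[OF P] h'_image I_light
    placement_slots_disjoint[OF P]
  by (cases "v \<in> I'"; cases "v \<in> g ` Q") auto

lemma inj_on_glue: "inj_on (glue Q g \<phi>) VT"
proof (rule inj_onI)
  fix a b assume ab: "a \<in> VT" "b \<in> VT" "glue Q g \<phi> a = glue Q g \<phi> b"
  show "a = b"
  proof (cases "a \<in> I'")
    case True
    hence "b \<in> I'" using ab glue_in_h'_image_iff by metis
    thus ?thesis using True ab(3) glue_I' inj_on_h' by (metis inj_onD)
  next
    case a_I': False
    hence b_I': "b \<notin> I'" using ab glue_in_h'_image_iff by metis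
    show ?thesis
    proof (cases "a \<in> g ` Q")
      case True
      hence "b \<in> g ` Q" using ab glue_heavy_iff by metis
      thus ?thesis using True ab(3) glue_slot by force
    next
      case False
      hence "b \<notin> g ` Q" using ab glue_heavy_iff by metis
      thus ?thesis using False a_I' b_I' ab inj_\<phi> glue_free by (metis Diff_iff inj_onD)
    qed
  qed
qed

lemma glue_image: "glue Q g \<phi> ` VT \<subseteq> VG"
proof
  fix y assume "y \<in> glue Q g \<phi> ` VT"
  then obtain v where v: "v \<in> VT" "y = glue Q g \<phi> v" by blast
  thus "y \<in> VG"
    using glue_I' glue_slot glue_free image_\<phi> placementD(1)[OF P] h'_image I_subset heavy_subset
    by (cases "v \<in> I'"; cases "v \<in> g ` Q") auto
qed

lemma card_heavy_reach_glue:
  assumes x: "x \<in> VT"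
  shows "real (card (heavy_reach (glue Q g \<phi>) x)) \<le> load g Q x"
proof -
  let ?Qx = "{q\<in>Q. g q \<in> nbrs ET x}"
  have "{w\<in>nbrs ET x. glue Q g \<phi> w \<in> heavy} = g ` ?Qx"
    using glue_heavy_iff nbrs_subset[OF graph_T] by auto
  hence "heavy_reach (glue Q g \<phi>) x = (\<Union>q\<in>?Qx. nbrs EG q)"
    unfolding heavy_reach_def using glue_slot by auto
  hence "real (card (heavy_reach (glue Q g \<phi>) x)) \<le> (\<Sum>q\<in>?Qx. real (card (nbrs EG q)))"
    using real_card_UN_le[of ?Qx] finite_placement[OF P] by simp
  also have "\<dots> = (\<Sum>q\<in>?Qx. real (degree EG q))"
    using degree_eq_card_nbrs[OF graph_G] by simp
  also have "\<dots> = load g Q x"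
    unfolding load_def by (rule sum.inter_filter[OF finite_placement[OF P]])
  finally show ?thesis .
qed

lemma admissible_glue: "admissible (glue Q g \<phi>)"
proof -
  let ?f = "glue Q g \<phi>"
  have "\<not> ?f ` e \<subseteq> heavy" if e: "e \<in> ET" for e
  proof
    assume sub: "?f ` e \<subseteq> heavy"
    obtain u v where uv: "e = {u, v}" "u \<in> VT" "v \<in> VT" using sgraph_edgeE[OF graph_T e] by metis
    hence "u \<in> g ` Q" "v \<in> g ` Q" using sub glue_heavy_iff by auto
    thus False using e uv(1) placementD(4)[OF P] by blast
  qed
  moreover have "?f w \<notin> heavy" if "v \<in> I'" "w \<in> nbrs ET v" for v w
    using that glue_heavy_iff nbrs_subset[OF graph_T] placementD(3)[OF P]
    unfolding slots_def by blast
  moreover have "real (card (heavy_reach ?f x)) \<le> load_cap" if "x \<in> VT" for x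
    using card_heavy_reach_glue[OF that] placementD(5)[OF P] that by fastforce
  ultimately show ?thesis
    unfolding admissible_def using inj_on_glue glue_image glue_I' by blast
qed

end

lemma admissible_exists: "\<exists>f. admissible f"
proof -
  obtain Q g where P: "placement Q g" and cQ: "card Q = card VT + card heavy - card VG"
    using placement_exists by blast
  obtain \<phi> where "\<phi> ` (VT - I' - g ` Q) \<subseteq> VG - heavy - h' ` I'" "inj_on \<phi> (VT - I' - g ` Q)"
    using card_le_inj[OF _ _ card_free_le[OF P cQ]] finite_VT finite_VG by blast
  thus ?thesis using admissible_glue[OF P] by blast
qed

lemma packing_extending_h'_exists:
  obtains f where "packing VT ET VG EG f" "\<forall>v\<in>I'. f v = h' v"
  using admissible_exists packing_if_admissible by metis

end

section \<open>Choosing the parameters\<close>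

text \<open>The room assumptions of tree_packing for D = n^(1/8), DT = c n^(3/4) and DG = 2n/3 + n/100,
  together with 2K \<le> D, which makes the vertices of I light.\<close>
definition room :: "real \<Rightarrow> real \<Rightarrow> nat \<Rightarrow> bool" where
  "room K c n \<longleftrightarrow> 2 * K \<le> real n powr (1/8)
    \<and> 2 * K * real n / real n powr (1/8) + K + 1 + real n powr (1/8) + (2 * real n / 3 + real n / 100)
        + real n / 10 + 2 * (c * real n powr (3/4)) * real n powr (1/8) < real n
    \<and> 3 * K + 6 * K * real n / real n powr (1/8) + 40 * K * (c * real n powr (3/4))
        < (real n - 2 * K * real n / real n powr (1/8)) / 3"

lemma eventually_room: "eventually (room K c) sequentially"
  unfolding room_def by (intro eventually_conj) real_asymp+

lemma packing_with_room:
  fixes k :: nat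
  assumes room: "room (real k) c (card VG)" and c: "c \<ge> 0"
    and G: "sgraph VG EG" "real (card EG) \<le> real k * real (card VG)"
      "real (maxdeg VG EG) \<le> 2 * real (card VG) / 3 + real (card VG) / 100"
    and T: "tree VT ET" "card VT \<le> card VG" "real (maxdeg VT ET) \<le> c * real (card VG) powr (3/4)"
    and I: "I \<subseteq> VG" "card I \<le> k" "\<forall>v\<in>I. degree EG v \<le> 2 * k"
    and I': "I' \<subseteq> VT" "card I' = card I" "\<forall>v\<in>I'. degree ET v \<le> 2"
    and h': "packing I' (induced ET I') I (induced EG I) h'"
  obtains f where "packing VT ET VG EG f" "\<forall>v\<in>I'. f v = h' v"
proof -
  let ?n = "real (card VG)"
  have T': "sgraph VT ET" "card ET \<le> card VT" using T(1) unfolding tree_def by auto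
  interpret tree_packing VG EG VT ET I I' h' k "?n powr (1/8)" "c * ?n powr (3/4)"
    "2 * ?n / 3 + ?n / 100"
  proof
    show "real (degree ET v) \<le> c * ?n powr (3/4)" if "v \<in> VT" for v
      using degree_le_maxdeg[OF sgraph_finite[OF T'(1)] that, of ET] T(3) by linarith
    show "real (degree EG v) \<le> 2 * ?n / 3 + ?n / 100" if "v \<in> VG" for v
      using degree_le_maxdeg[OF sgraph_finite[OF G(1)] that, of EG] G(3) by linarith
    show "real (degree EG v) \<le> ?n powr (1/8)" if "v \<in> I" for v
      using I(3) that room unfolding room_def by fastforce
    have "card VG \<noteq> 0"
      using room unfolding room_def by (intro notI) simp
    thus "0 < ?n powr (1/8)" by simp
  qed (use room c G T T' I I' h' in \<open>simp_all add: room_def\<close>)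
  show thesis using packing_extending_h'_exists that by blast
qed

lemma packing_for_large_n:
  fixes k :: nat
  assumes room: "room (real k) (60 * (2 * real k + 1)) n" and e: "e \<le> real n / 100"
    and H: "sgraph VG EG \<and> card VG = n \<and> real (card EG) \<le> real k * real n \<and>
         real (maxdeg VG EG) < 2 * real n / 3 + e \<and>
         tree VT ET \<and> card VT \<le> n \<and>
         real (maxdeg VT ET) < 60 * (2 * real k + 1) * real n powr (3/4) \<and>
         I \<subseteq> VG \<and> card I \<le> k \<and> (\<forall>v\<in>I. degree EG v \<le> 2 * k) \<and>
         I' \<subseteq> VT \<and> card I' = card I \<and> (\<forall>v\<in>I'. degree ET v \<le> 2) \<and>
         packing I' (induced ET I') I (induced EG I) h'"
  shows "\<exists>f'. packing VT ET VG EG f' \<and>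
    real (maxdeg VG ((\<lambda>e. f' ` e) ` ET \<union> EG))
      \<le> 2 * real n / 3 + (e + 60 * (2 * real k + 1) * real n powr (3/4)) \<and>
    (\<forall>v\<in>I'. f' v = h' v)"
proof -
  define c where "c = 60 * (2 * real k + 1)"
  have G: "sgraph VG EG" "card VG = n" "real (card EG) \<le> real k * real n"
    "real (maxdeg VG EG) < 2 * real n / 3 + e"
    and T: "tree VT ET" "card VT \<le> n" "real (maxdeg VT ET) < c * real n powr (3/4)"
    and I: "I \<subseteq> VG" "card I \<le> k" "\<forall>v\<in>I. degree EG v \<le> 2 * k"
    and I': "I' \<subseteq> VT" "card I' = card I" "\<forall>v\<in>I'. degree ET v \<le> 2"
    and h': "packing I' (induced ET I') I (induced EG I) h'"
    using H unfolding c_def by blast+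
  have G': "real (maxdeg VG EG) \<le> 2 * real n / 3 + real n / 100" using G(4) e by linarith
  have "c \<ge> 0" unfolding c_def by simp
  then obtain f where f: "packing VT ET VG EG f" "\<forall>v\<in>I'. f v = h' v"
    using packing_with_room[OF room[folded c_def G(2)] _ G(1) G(3)[folded G(2)] G'[folded G(2)] T(1)
        T(2)[folded G(2)] less_imp_le[OF T(3)[folded G(2)]] I I' h']
    by blast
  have "maxdeg VG ((\<lambda>e. f ` e) ` ET \<union> EG) \<le> maxdeg VT ET + maxdeg VG EG"
    using maxdeg_image_union_le[of VT ET VG EG f] G(1) T(1) f(1) unfolding tree_def packing_def
    by blast
  hence "real (maxdeg VG ((\<lambda>e. f ` e) ` ET \<union> EG)) \<le> 2 * real n / 3 + (e + c * real n powr (3/4))"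
    using G(4) T(3) by linarith
  thus ?thesis using f unfolding c_def by blast
qed

theorem lemma2:
  fixes k :: nat
  assumes "k \<ge> 1"
  shows "\<forall>\<epsilon> :: nat \<Rightarrow> real. \<epsilon> \<in> o(\<lambda>n. real n) \<longrightarrow>
    (\<exists>\<delta> :: nat \<Rightarrow> real. \<delta> \<in> o(\<lambda>n. real n) \<and>
     (\<exists>N. \<forall>n \<ge> N.
       \<forall>(VG :: 'b set) EG (VT :: 'a set) ET I I' h'.
         sgraph VG EG \<and> card VG = n \<and> real (card EG) \<le> real k * real n \<and>
         real (maxdeg VG EG) < 2 * real n / 3 + \<epsilon> n \<and>
         tree VT ET \<and> card VT \<le> n \<and>
         real (maxdeg VT ET) < 60 * (2 * real k + 1) * real n powr (3/4) \<and>
         I \<subseteq> VG \<and> card I \<le> k \<and> (\<forall>v\<in>I. degree EG v \<le> 2 * k) \<and>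
         I' \<subseteq> VT \<and> card I' = card I \<and> (\<forall>v\<in>I'. degree ET v \<le> 2) \<and>
         packing I' (induced ET I') I (induced EG I) h'
         \<longrightarrow>
         (\<exists>f'. packing VT ET VG EG f' \<and>
            real (maxdeg VG ((\<lambda>e. f' ` e) ` ET \<union> EG)) \<le> 2 * real n / 3 + \<delta> n \<and>
            (\<forall>v\<in>I'. f' v = h' v))))"
proof (intro allI impI)
  fix \<epsilon> :: "nat \<Rightarrow> real" assume \<epsilon>: "\<epsilon> \<in> o(\<lambda>n. real n)"
  let ?c = "60 * (2 * real k + 1)"
  have \<delta>: "(\<lambda>n. \<epsilon> n + ?c * real n powr (3/4)) \<in> o(\<lambda>n. real n)"
    by (intro sum_in_smallo[OF \<epsilon>]) real_asymp
  have "eventually (\<lambda>n. norm (\<epsilon> n) \<le> 1/100 * norm (real n)) sequentially"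
    by (rule landau_o.smallD[OF \<epsilon>]) simp
  hence "eventually (\<lambda>n. \<epsilon> n \<le> real n / 100 \<and> room (real k) ?c n) sequentially"
    using eventually_room[of "real k" ?c] by eventually_elim auto
  then obtain N where N: "\<And>n. n \<ge> N \<Longrightarrow> \<epsilon> n \<le> real n / 100 \<and> room (real k) ?c n"
    unfolding eventually_sequentially by blast
  show "\<exists>\<delta> :: nat \<Rightarrow> real. \<delta> \<in> o(\<lambda>n. real n) \<and>
     (\<exists>N. \<forall>n \<ge> N.
       \<forall>(VG :: 'b set) EG (VT :: 'a set) ET I I' h'.
         sgraph VG EG \<and> card VG = n \<and> real (card EG) \<le> real k * real n \<and>
         real (maxdeg VG EG) < 2 * real n / 3 + \<epsilon> n \<and>
         tree VT ET \<and> card VT \<le> n \<and>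
         real (maxdeg VT ET) < 60 * (2 * real k + 1) * real n powr (3/4) \<and>
         I \<subseteq> VG \<and> card I \<le> k \<and> (\<forall>v\<in>I. degree EG v \<le> 2 * k) \<and>
         I' \<subseteq> VT \<and> card I' = card I \<and> (\<forall>v\<in>I'. degree ET v \<le> 2) \<and>
         packing I' (induced ET I') I (induced EG I) h'
         \<longrightarrow>
         (\<exists>f'. packing VT ET VG EG f' \<and>
            real (maxdeg VG ((\<lambda>e. f' ` e) ` ET \<union> EG)) \<le> 2 * real n / 3 + \<delta> n \<and>
            (\<forall>v\<in>I'. f' v = h' v)))"
    using N packing_for_large_n
    by (intro exI[of _ "\<lambda>n. \<epsilon> n + ?c * real n powr (3/4)"] conjI \<delta> exI[of _ N]) blast
qed

end
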